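(* Let $R$ be a commutative ring with identity, $\mathcal S$ an associative prime algebra over $R$ with identity, and $\mathcal M$ a $2$-torsion free, jointly prime bimodule over $\mathcal S$. Let $\delta$ be a derivation on $\mathcal S$ and $f:\mathcal S\to\mathcal M$ a bimodule homomorphism over $\mathcal S$. If $D:\mathcal S\to\mathcal M$ is a Jordan $(\delta,f)$-derivation on $\mathcal M$, then $D$ is a $(\delta,f)$-derivation on $\mathcal M$, i.e. $D(xy)=D(x)y+f(x)\delta(y)$ for all $x,y\in\mathcal S$.
   Context: A derivation on $\mathcal S$ is an additive map $\delta:\mathcal S\to\mathcal S$ with $\delta(ab)=\delta(a)b+a\delta(b)$. An additive map $D:\mathcal S\to\mathcal M$ is a $(\delta,f)$-derivation on $\mathcal M$ if $D(xy)=D(x)y+f(x)\delta(y)$ for all $x,y\in\mathcal S$, and a Jordan $(\delta,f)$-derivation on $\mathcal M$ if $D(x^2)=D(x)x+f(x)\delta(x)$ for all $x\in\mathcal S$. $\mathcal M$ is $2$-torsion free if $2m=0$ implies $m=0$. A proper bisubmodule $\mathcal K$ of $\mathcal M$ is jointly prime if for every left ideal $I$ of $\mathcal S$, right ideal $J$ of $\mathcal S$ and bisubmodule $\mathcal N$ of $\mathcal M$, $I\mathcal N J\subseteq\mathcal K$ implies $I\mathcal M J\subseteq \mathcal K$ or $\mathcal N\subseteq\mathcal K$; $\mathcal M$ is jointly prime if its zero bisubmodule is jointly prime. The algebra $\mathcal S$ is prime if for any two ($R$-)ideals $U,V$ of $\mathcal S$, $UV=0$ implies $U=0$ or $V=0$.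 *)

theory Defs
  imports Main
begin

text \<open>The ring R is a type 'r of class comm_ring_1.  The algebra S is a type 's of
class ring_1 (associative, with identity), with R-scalar action sr.  The bimodule M is a
type 'm of class ab_group_add with R-scalar action mr, left S-action la and right
S-action ra.\<close>

definition r_algebra :: "('r::comm_ring_1 \<Rightarrow> 's::ring_1 \<Rightarrow> 's) \<Rightarrow> bool" where
  "r_algebra sr \<longleftrightarrow>
     (\<forall>r a b. sr r (a + b) = sr r a + sr r b) \<and>
     (\<forall>r s a. sr (r + s) a = sr r a + sr s a) \<and>
     (\<forall>r s a. sr (r * s) a = sr r (sr s a)) \<and>
     (\<forall>a. sr 1 a = a) \<and>
     (\<forall>r a b. sr r (a * b) = sr r a * b) \<and>
     (\<forall>r a b. sr r (a * b) = a * sr r b)"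

definition bimodule ::
  "('r::comm_ring_1 \<Rightarrow> 's::ring_1 \<Rightarrow> 's) \<Rightarrow> ('r \<Rightarrow> 'm::ab_group_add \<Rightarrow> 'm)
   \<Rightarrow> ('s \<Rightarrow> 'm \<Rightarrow> 'm) \<Rightarrow> ('m \<Rightarrow> 's \<Rightarrow> 'm) \<Rightarrow> bool" where
  "bimodule sr mr la ra \<longleftrightarrow>
     \<comment> \<open>R-module\<close>
     (\<forall>r m n. mr r (m + n) = mr r m + mr r n) \<and>
     (\<forall>r s m. mr (r + s) m = mr r m + mr s m) \<and>
     (\<forall>r s m. mr (r * s) m = mr r (mr s m)) \<and>
     (\<forall>m. mr 1 m = m) \<and>
     \<comment> \<open>unital left S-module\<close>
     (\<forall>a m n. la a (m + n) = la a m + la a n) \<and>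
     (\<forall>a b m. la (a + b) m = la a m + la b m) \<and>
     (\<forall>a b m. la (a * b) m = la a (la b m)) \<and>
     (\<forall>m. la 1 m = m) \<and>
     \<comment> \<open>unital right S-module\<close>
     (\<forall>a m n. ra (m + n) a = ra m a + ra n a) \<and>
     (\<forall>a b m. ra m (a + b) = ra m a + ra m b) \<and>
     (\<forall>a b m. ra m (a * b) = ra (ra m a) b) \<and>
     (\<forall>m. ra m 1 = m) \<and>
     \<comment> \<open>bimodule compatibility\<close>
     (\<forall>a b m. ra (la a m) b = la a (ra m b)) \<and>
     \<comment> \<open>compatibility with R\<close>
     (\<forall>r a m. mr r (la a m) = la (sr r a) m) \<and>
     (\<forall>r a m. mr r (la a m) = la a (mr r m)) \<and>
     (\<forall>r a m. mr r (ra m a) = ra m (sr r a)) \<and>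
     (\<forall>r a m. mr r (ra m a) = ra (mr r m) a)"

definition r_subspace :: "('r \<Rightarrow> 's::ring_1 \<Rightarrow> 's) \<Rightarrow> 's set \<Rightarrow> bool" where
  "r_subspace sr U \<longleftrightarrow> 0 \<in> U \<and> (\<forall>a\<in>U. \<forall>b\<in>U. a + b \<in> U) \<and> (\<forall>a\<in>U. - a \<in> U)
     \<and> (\<forall>r. \<forall>a\<in>U. sr r a \<in> U)"

definition left_ideal :: "('r \<Rightarrow> 's::ring_1 \<Rightarrow> 's) \<Rightarrow> 's set \<Rightarrow> bool" where
  "left_ideal sr I \<longleftrightarrow> r_subspace sr I \<and> (\<forall>s a. a \<in> I \<longrightarrow> s * a \<in> I)"

definition right_ideal :: "('r \<Rightarrow> 's::ring_1 \<Rightarrow> 's) \<Rightarrow> 's set \<Rightarrow> bool" where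
  "right_ideal sr I \<longleftrightarrow> r_subspace sr I \<and> (\<forall>s a. a \<in> I \<longrightarrow> a * s \<in> I)"

definition two_sided_ideal :: "('r \<Rightarrow> 's::ring_1 \<Rightarrow> 's) \<Rightarrow> 's set \<Rightarrow> bool" where
  "two_sided_ideal sr I \<longleftrightarrow> left_ideal sr I \<and> right_ideal sr I"

definition prime_algebra :: "('r \<Rightarrow> 's::ring_1 \<Rightarrow> 's) \<Rightarrow> bool" where
  "prime_algebra sr \<longleftrightarrow>
     (\<forall>U V. two_sided_ideal sr U \<and> two_sided_ideal sr V \<and> (\<forall>u\<in>U. \<forall>v\<in>V. u * v = 0)
        \<longrightarrow> U = {0} \<or> V = {0})"

definition bisubmodule ::
  "('r \<Rightarrow> 'm::ab_group_add \<Rightarrow> 'm) \<Rightarrow> ('s \<Rightarrow> 'm \<Rightarrow> 'm) \<Rightarrow> ('m \<Rightarrow> 's \<Rightarrow> 'm) \<Rightarrow> 'm set \<Rightarrow> bool" where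
  "bisubmodule mr la ra N \<longleftrightarrow> 0 \<in> N \<and> (\<forall>m\<in>N. \<forall>n\<in>N. m + n \<in> N) \<and> (\<forall>m\<in>N. - m \<in> N)
     \<and> (\<forall>r. \<forall>m\<in>N. mr r m \<in> N) \<and> (\<forall>a. \<forall>m\<in>N. la a m \<in> N) \<and> (\<forall>a. \<forall>m\<in>N. ra m a \<in> N)"

text \<open>\<open>I N J \<subseteq> K\<close>: since K is an additive subgroup, containment of the generated
  subgroup is equivalent to containment of all products \<open>a n b\<close>.\<close>

definition jointly_prime_sub ::
  "('r \<Rightarrow> 's::ring_1 \<Rightarrow> 's) \<Rightarrow> ('r \<Rightarrow> 'm::ab_group_add \<Rightarrow> 'm) \<Rightarrow> ('s \<Rightarrow> 'm \<Rightarrow> 'm)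
   \<Rightarrow> ('m \<Rightarrow> 's \<Rightarrow> 'm) \<Rightarrow> 'm set \<Rightarrow> bool" where
  "jointly_prime_sub sr mr la ra K \<longleftrightarrow>
     bisubmodule mr la ra K \<and> K \<noteq> UNIV \<and>
     (\<forall>I J N. left_ideal sr I \<and> right_ideal sr J \<and> bisubmodule mr la ra N \<and>
        (\<forall>a\<in>I. \<forall>n\<in>N. \<forall>b\<in>J. la a (ra n b) \<in> K) \<longrightarrow>
        (\<forall>a\<in>I. \<forall>m. \<forall>b\<in>J. la a (ra m b) \<in> K) \<or> N \<subseteq> K)"

definition jointly_prime_bimodule ::
  "('r \<Rightarrow> 's::ring_1 \<Rightarrow> 's) \<Rightarrow> ('r \<Rightarrow> 'm::ab_group_add \<Rightarrow> 'm) \<Rightarrow> ('s \<Rightarrow> 'm \<Rightarrow> 'm)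
   \<Rightarrow> ('m \<Rightarrow> 's \<Rightarrow> 'm) \<Rightarrow> bool" where
  "jointly_prime_bimodule sr mr la ra \<longleftrightarrow> jointly_prime_sub sr mr la ra {0}"

definition two_torsion_free :: "'m::ab_group_add itself \<Rightarrow> bool" where
  "two_torsion_free _ \<longleftrightarrow> (\<forall>m::'m. m + m = 0 \<longrightarrow> m = 0)"

definition additive :: "('a::ab_group_add \<Rightarrow> 'b::ab_group_add) \<Rightarrow> bool" where
  "additive g \<longleftrightarrow> (\<forall>x y. g (x + y) = g x + g y)"

definition derivation :: "('s::ring_1 \<Rightarrow> 's) \<Rightarrow> bool" where
  "derivation \<delta> \<longleftrightarrow> additive \<delta> \<and> (\<forall>a b. \<delta> (a * b) = \<delta> a * b + a * \<delta> b)"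

definition bimodule_hom ::
  "('s::ring_1 \<Rightarrow> 'm \<Rightarrow> 'm) \<Rightarrow> ('m::ab_group_add \<Rightarrow> 's \<Rightarrow> 'm) \<Rightarrow> ('s \<Rightarrow> 'm) \<Rightarrow> bool" where
  "bimodule_hom la ra f \<longleftrightarrow> additive f \<and>
     (\<forall>a x. f (a * x) = la a (f x)) \<and> (\<forall>x a. f (x * a) = ra (f x) a)"

definition delta_f_derivation ::
  "('m::ab_group_add \<Rightarrow> 's::ring_1 \<Rightarrow> 'm) \<Rightarrow> ('s \<Rightarrow> 's) \<Rightarrow> ('s \<Rightarrow> 'm) \<Rightarrow> ('s \<Rightarrow> 'm) \<Rightarrow> bool" where
  "delta_f_derivation ra \<delta> f D \<longleftrightarrow> additive D \<and>
     (\<forall>x y. D (x * y) = ra (D x) y + ra (f x) (\<delta> y))"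

definition jordan_delta_f_derivation ::
  "('m::ab_group_add \<Rightarrow> 's::ring_1 \<Rightarrow> 'm) \<Rightarrow> ('s \<Rightarrow> 's) \<Rightarrow> ('s \<Rightarrow> 'm) \<Rightarrow> ('s \<Rightarrow> 'm) \<Rightarrow> bool" where
  "jordan_delta_f_derivation ra \<delta> f D \<longleftrightarrow> additive D \<and>
     (\<forall>x. D (x * x) = ra (D x) x + ra (f x) (\<delta> x))"

end

theory Submission
  imports Defs
begin

text \<open>Because \<open>\<S>\<close> has an identity, the Jordan identity can be linearized at \<open>x + 1\<close>:
  with \<open>\<delta> 1 = 0\<close> this gives the inner form \<open>D x = D(1) x + f(1) \<delta>(x)\<close>.  Every map of that
  form is a \<open>(\<delta>, f)\<close>-derivation, since \<open>\<delta>\<close> obeys the Leibniz rule and \<open>f x = f(1) x\<close>.\<close>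

definition right_module :: "('m::ab_group_add \<Rightarrow> 's::ring_1 \<Rightarrow> 'm) \<Rightarrow> bool" where
  "right_module ra \<longleftrightarrow>
     (\<forall>a m n. ra (m + n) a = ra m a + ra n a) \<and>
     (\<forall>a b m. ra m (a + b) = ra m a + ra m b) \<and>
     (\<forall>a b m. ra m (a * b) = ra (ra m a) b) \<and>
     (\<forall>m. ra m 1 = m)"

lemma bimodule_right_module: "bimodule sr mr la ra \<Longrightarrow> right_module ra"
  unfolding bimodule_def right_module_def by (elim conjE) (intro conjI)

lemma derivation_one:
  assumes "derivation \<delta>"
  shows "\<delta> 1 = 0"
proof -
  have "\<delta> 1 = \<delta> 1 + \<delta> 1"
    using assms unfolding derivation_def by (metis mult_1_left mult_1_right)
  then show ?thesis by simp
qed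

lemma jordan_delta_f_derivation_inner:
  assumes ra: "right_module ra"
    and \<delta>: "derivation \<delta>"
    and f: "additive f"
    and D: "jordan_delta_f_derivation ra \<delta> f D"
  shows "D x = ra (D 1) x + ra (f 1) (\<delta> x)"
proof -
  have raL: "\<And>a m n. ra (m + n) a = ra m a + ra n a"
    and raR: "\<And>a b m. ra m (a + b) = ra m a + ra m b"
    and ra1: "\<And>m. ra m 1 = m"
    using ra by (simp_all add: right_module_def)
  have \<delta>_add: "\<And>x y. \<delta> (x + y) = \<delta> x + \<delta> y"
    using \<delta> by (simp add: derivation_def additive_def)
  have f_add: "\<And>x y. f (x + y) = f x + f y"
    using f by (simp add: additive_def)
  have D_add: "\<And>x y. D (x + y) = D x + D y"
    and D_sq: "\<And>x. D (x * x) = ra (D x) x + ra (f x) (\<delta> x)"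
    using D by (simp_all add: jordan_delta_f_derivation_def additive_def)
  have "D (x * x) + D x + D x + D 1 = D ((x + 1) * (x + 1))"
    by (simp add: algebra_simps D_add)
  also have "\<dots> = ra (D (x + 1)) (x + 1) + ra (f (x + 1)) (\<delta> (x + 1))"
    by (rule D_sq)
  also have "\<dots> = (ra (D x) x + ra (f x) (\<delta> x)) + D x + (ra (D 1) x + ra (f 1) (\<delta> x)) + D 1"
    unfolding D_add \<delta>_add f_add derivation_one[OF \<delta>] raL raR ra1 add_0_right
    by (simp only: add_ac)
  finally show ?thesis
    by (simp add: D_sq add.assoc add.left_commute add.commute)
qed

lemma delta_f_derivation_of_inner:
  assumes ra: "right_module ra"
    and \<delta>: "derivation \<delta>"
    and f_right: "\<And>x a. f (x * a) = ra (f x) a"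
    and D_add: "additive D"
    and D_inner: "\<And>x. D x = ra c x + ra (f 1) (\<delta> x)"
  shows "delta_f_derivation ra \<delta> f D"
  unfolding delta_f_derivation_def
proof (intro conjI allI)
  fix x y
  have raL: "\<And>a m n. ra (m + n) a = ra m a + ra n a"
    and raR: "\<And>a b m. ra m (a + b) = ra m a + ra m b"
    and raM: "\<And>a b m. ra m (a * b) = ra (ra m a) b"
    using ra by (simp_all add: right_module_def)
  have "D (x * y) = ra c (x * y) + ra (f 1) (\<delta> x * y + x * \<delta> y)"
    using \<delta> by (simp add: D_inner derivation_def)
  also have "\<dots> = ra (ra c x + ra (f 1) (\<delta> x)) y + ra (f x) (\<delta> y)"
    using f_right[of 1 x] by (simp add: raR raM raL add.assoc)
  also have "\<dots> = ra (D x) y + ra (f x) (\<delta> y)"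
    by (simp only: D_inner)
  finally show "D (x * y) = ra (D x) y + ra (f x) (\<delta> y)" .
qed (fact D_add)

theorem theorem3p22:
  fixes sr :: "'r::comm_ring_1 \<Rightarrow> 's::ring_1 \<Rightarrow> 's"
    and mr :: "'r \<Rightarrow> 'm::ab_group_add \<Rightarrow> 'm"
    and la :: "'s \<Rightarrow> 'm \<Rightarrow> 'm"
    and ra :: "'m \<Rightarrow> 's \<Rightarrow> 'm"
    and \<delta> :: "'s \<Rightarrow> 's"
    and f D :: "'s \<Rightarrow> 'm"
  assumes "r_algebra sr"
    and "prime_algebra sr"
    and "bimodule sr mr la ra"
    and "two_torsion_free TYPE('m)"
    and "jointly_prime_bimodule sr mr la ra"
    and "derivation \<delta>"
    and "bimodule_hom la ra f"
    and "jordan_delta_f_derivation ra \<delta> f D"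
  shows "delta_f_derivation ra \<delta> f D"
proof -
  have ra: "right_module ra"
    using assms(3) by (rule bimodule_right_module)
  have f_add: "additive f" and f_right: "\<And>x a. f (x * a) = ra (f x) a"
    using assms(7) unfolding bimodule_hom_def by blast+
  have D_add: "additive D"
    using assms(8) by (simp add: jordan_delta_f_derivation_def)
  show ?thesis
    using ra assms(6) f_right D_add
      jordan_delta_f_derivation_inner[OF ra assms(6) f_add assms(8)]
    by (rule delta_f_derivation_of_inner)
qed

end
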